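(* Let $d \geq 3$, $s\ge1$, and let $\pi, \sigma$ be permutations of $\{1,\dots,d\}$ such that the cycle decomposition of $\pi^{-1}\sigma$ contains a cycle of length $p$ for some $p \geq 3$. Identifying permutations with their permutation matrices, $$\{\lambda \in [0,1] : (1-\lambda) \pi + \lambda \sigma \in \mathsf U_{d,s}\} = \{\lambda \in [0,1] : (1-\lambda) \pi + \lambda \sigma \in \mathsf L_{d,s}\} = \{k/s : k = 0, \ldots, s\}.$$ In particular, this holds for every edge $[\pi,\sigma]$ of the Birkhoff polytope $\mathsf B_d$.
   Context: $\mathsf B_d$ is the set (Birkhoff polytope) of $d\times d$ bistochastic matrices. For $U\in\mathcal U(ds)$ viewed as a $d\times d$ block matrix with blocks $U_{ij}\in M_s(\mathbb C)$, $\phi_{d,s}(U)=\big(\tfrac1s\|U_{ij}\|_F^2\big)_{i,j=1}^d$ with $\|X\|_F=\operatorname{Tr}(XX^* )^{1/2}$, and $\mathsf U_{d,s}:=\phi_{d,s}(\mathcal U(ds))$. $\mathsf{Brac}_{d,s}$ is the set of pairs of probability vectors $(\alpha,\beta)$ in $\mathbb R^d$ for which there exist $A_1,\dots,A_d,B_1,\dots,B_d\in M_s(\mathbb C)$ with $\sum_i A_iA_i^*=\sum_iB_iB_i^*=I_s$, $\sum_iA_iB_i^*=0$, $\tfrac1s\|A_i\|_F^2=\alpha_i$, $\tfrac1s\|B_i\|_F^2=\beta_i$ for all $i$. $\mathsf L_{d,s}$ is the set of $B\in\mathsf B_d$ all of whose pairs of distinct rows and pairs of distinct columns belong to $\mathsf{Brac}_{d,s}$.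 *)

theory Defs
  imports "HOL-Analysis.Analysis" "HOL-Combinatorics.Orbits"
begin

text \<open>Matrices are represented as functions nat \<Rightarrow> nat \<Rightarrow> _; an n x n matrix is given by
  its entries with indices < n (0-based). Entries outside the range are irrelevant.\<close>

definition unitary_mat :: "nat \<Rightarrow> (nat \<Rightarrow> nat \<Rightarrow> complex) \<Rightarrow> bool" where
  "unitary_mat n U \<longleftrightarrow>
     (\<forall>i<n. \<forall>j<n. (\<Sum>k<n. U i k * cnj (U j k)) = (if i = j then 1 else 0)) \<and>
     (\<forall>i<n. \<forall>j<n. (\<Sum>k<n. cnj (U k i) * U k j) = (if i = j then 1 else 0))"

definition block :: "nat \<Rightarrow> (nat \<Rightarrow> nat \<Rightarrow> complex) \<Rightarrow> nat \<Rightarrow> nat \<Rightarrow> nat \<Rightarrow> nat \<Rightarrow> complex" where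
  "block s U i j = (\<lambda>a b. U (i * s + a) (j * s + b))"

definition frob2 :: "nat \<Rightarrow> (nat \<Rightarrow> nat \<Rightarrow> complex) \<Rightarrow> real" where
  "frob2 s X = (\<Sum>a<s. \<Sum>b<s. (cmod (X a b))\<^sup>2)"

definition phi :: "nat \<Rightarrow> nat \<Rightarrow> (nat \<Rightarrow> nat \<Rightarrow> complex) \<Rightarrow> nat \<Rightarrow> nat \<Rightarrow> real" where
  "phi d s U i j = frob2 s (block s U i j) / real s"

definition Uset :: "nat \<Rightarrow> nat \<Rightarrow> (nat \<Rightarrow> nat \<Rightarrow> real) set" where
  "Uset d s = {B. \<exists>U. unitary_mat (d * s) U \<and> (\<forall>i<d. \<forall>j<d. B i j = phi d s U i j)}"

definition bistochastic :: "nat \<Rightarrow> (nat \<Rightarrow> nat \<Rightarrow> real) \<Rightarrow> bool" where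
  "bistochastic d B \<longleftrightarrow> (\<forall>i<d. \<forall>j<d. 0 \<le> B i j) \<and>
     (\<forall>i<d. (\<Sum>j<d. B i j) = 1) \<and> (\<forall>j<d. (\<Sum>i<d. B i j) = 1)"

definition prob_vec :: "nat \<Rightarrow> (nat \<Rightarrow> real) \<Rightarrow> bool" where
  "prob_vec d \<alpha> \<longleftrightarrow> (\<forall>i<d. 0 \<le> \<alpha> i) \<and> (\<Sum>i<d. \<alpha> i) = 1"

definition mul_adj :: "nat \<Rightarrow> (nat \<Rightarrow> nat \<Rightarrow> complex) \<Rightarrow> (nat \<Rightarrow> nat \<Rightarrow> complex) \<Rightarrow> nat \<Rightarrow> nat \<Rightarrow> complex" where
  "mul_adj s X Y a b = (\<Sum>c<s. X a c * cnj (Y b c))"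

definition Brac :: "nat \<Rightarrow> nat \<Rightarrow> (nat \<Rightarrow> real) \<Rightarrow> (nat \<Rightarrow> real) \<Rightarrow> bool" where
  "Brac d s \<alpha> \<beta> \<longleftrightarrow> prob_vec d \<alpha> \<and> prob_vec d \<beta> \<and>
     (\<exists>A B :: nat \<Rightarrow> nat \<Rightarrow> nat \<Rightarrow> complex.
        (\<forall>a<s. \<forall>b<s. (\<Sum>i<d. mul_adj s (A i) (A i) a b) = (if a = b then 1 else 0)) \<and>
        (\<forall>a<s. \<forall>b<s. (\<Sum>i<d. mul_adj s (B i) (B i) a b) = (if a = b then 1 else 0)) \<and>
        (\<forall>a<s. \<forall>b<s. (\<Sum>i<d. mul_adj s (A i) (B i) a b) = 0) \<and>
        (\<forall>i<d. frob2 s (A i) / real s = \<alpha> i \<and> frob2 s (B i) / real s = \<beta> i))"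

definition Lset :: "nat \<Rightarrow> nat \<Rightarrow> (nat \<Rightarrow> nat \<Rightarrow> real) set" where
  "Lset d s = {B. bistochastic d B \<and>
     (\<forall>i<d. \<forall>j<d. i \<noteq> j \<longrightarrow> Brac d s (\<lambda>k. B i k) (\<lambda>k. B j k)) \<and>
     (\<forall>i<d. \<forall>j<d. i \<noteq> j \<longrightarrow> Brac d s (\<lambda>k. B k i) (\<lambda>k. B k j))}"

definition perm_mat :: "(nat \<Rightarrow> nat) \<Rightarrow> nat \<Rightarrow> nat \<Rightarrow> real" where
  "perm_mat \<pi> i j = (if \<pi> i = j then 1 else 0)"

end

theory Submission
  imports Defs "Jordan_Normal_Form.Schur_Decomposition"
begin

text \<open>
  Splitting every index i into s copies and sending copy a of i to copy a of \<pi> i for the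
  first s - k copies and to copy a of \<sigma> i for the remaining k copies gives a permutation
  unitary whose normalised block norms form (1 - k/s) \<pi> + (k/s) \<sigma>. The block rows and
  block columns of any unitary are brackets, so U_{d,s} is contained in L_{d,s}.

  Conversely, a cycle of length at least 3 of \<pi>\<inverse>\<sigma> yields rows x and y = \<pi>\<inverse>\<sigma> x of
  (1 - t) \<pi> + t \<sigma> whose supports {\<pi> x, \<sigma> x} and {\<sigma> x, \<sigma> y} meet only in b = \<sigma> x.
  In a bracket (A_i), (B_i) realising these rows, \<Sum> A_i B_i^* = 0 collapses to A_b B_b^* = 0,
  so P = A_b^* A_b and Q = B_b^* B_b satisfy PQ = 0 and tr P + tr Q = s, while \<Sum> A_i A_i^* = I
  gives |P|^2 \<le> tr P and |Q|^2 \<le> tr Q (Frobenius norms). Hence |I - P - Q|^2 \<le> 0, so P is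
  idempotent and s t = tr P is an integer.
\<close>

(* Jordan_Normal_Form pulls in HOL-Algebra, whose group inverse notation would capture inv. *)
unbundle no m_inv_syntax

section \<open>Square matrices as functions\<close>

definition mat_mul :: "nat \<Rightarrow> (nat \<Rightarrow> nat \<Rightarrow> complex) \<Rightarrow> (nat \<Rightarrow> nat \<Rightarrow> complex)
    \<Rightarrow> nat \<Rightarrow> nat \<Rightarrow> complex" where
  "mat_mul s X Y = (\<lambda>a b. \<Sum>c<s. X a c * Y c b)"

definition mat_tr :: "nat \<Rightarrow> (nat \<Rightarrow> nat \<Rightarrow> complex) \<Rightarrow> complex" where
  "mat_tr s X = (\<Sum>a<s. X a a)"

definition mat_id :: "nat \<Rightarrow> nat \<Rightarrow> complex" where
  "mat_id = (\<lambda>a b. if a = b then 1 else 0)"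

definition mat_adj :: "(nat \<Rightarrow> nat \<Rightarrow> complex) \<Rightarrow> nat \<Rightarrow> nat \<Rightarrow> complex" where
  "mat_adj X = (\<lambda>a b. cnj (X b a))"

lemma mat_mul_assoc: "mat_mul s (mat_mul s X Y) Z = mat_mul s X (mat_mul s Y Z)"
proof (intro ext)
  fix a b
  have "mat_mul s (mat_mul s X Y) Z a b = (\<Sum>c<s. \<Sum>e<s. X a e * Y e c * Z c b)"
    by (simp add: mat_mul_def sum_distrib_right)
  also have "\<dots> = (\<Sum>e<s. \<Sum>c<s. X a e * (Y e c * Z c b))"
    by (subst sum.swap) (simp add: mult.assoc)
  also have "\<dots> = mat_mul s X (mat_mul s Y Z) a b"
    by (simp add: mat_mul_def sum_distrib_left)
  finally show "mat_mul s (mat_mul s X Y) Z a b = mat_mul s X (mat_mul s Y Z) a b" .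
qed

lemma mat_tr_mul_commute: "mat_tr s (mat_mul s X Y) = mat_tr s (mat_mul s Y X)"
  unfolding mat_tr_def mat_mul_def by (subst sum.swap) (simp add: mult.commute)

lemma mat_mul_diff_left: "mat_mul s (X - Y) Z = mat_mul s X Z - mat_mul s Y Z"
  by (simp add: mat_mul_def fun_diff_def algebra_simps sum_subtractf)

lemma mat_mul_diff_right: "mat_mul s Z (X - Y) = mat_mul s Z X - mat_mul s Z Y"
  by (simp add: mat_mul_def fun_diff_def algebra_simps sum_subtractf)

lemma mat_tr_diff: "mat_tr s (X - Y) = mat_tr s X - mat_tr s Y"
  by (simp add: mat_tr_def sum_subtractf)

lemma mat_mul_id_left: "a < s \<Longrightarrow> mat_mul s mat_id X a b = X a b"
  by (simp add: mat_mul_def mat_id_def if_distrib if_distribR cong: if_cong)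

lemma mat_mul_id_right: "b < s \<Longrightarrow> mat_mul s X mat_id a b = X a b"
  by (simp add: mat_mul_def mat_id_def if_distrib cong: if_cong)

lemma mat_tr_mul_id_left: "mat_tr s (mat_mul s mat_id X) = mat_tr s X"
  by (simp add: mat_tr_def mat_mul_id_left)

lemma mat_tr_mul_id_right: "mat_tr s (mat_mul s X mat_id) = mat_tr s X"
  by (simp add: mat_tr_def mat_mul_id_right)

lemma mat_tr_id: "mat_tr s mat_id = of_nat s"
  by (simp add: mat_tr_def mat_id_def)

lemma mat_adj_adj [simp]: "mat_adj (mat_adj X) = X"
  by (simp add: mat_adj_def)

lemma mat_adj_mul: "mat_adj (mat_mul s X Y) = mat_mul s (mat_adj Y) (mat_adj X)"
  by (simp add: mat_adj_def mat_mul_def mult.commute)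

lemma mul_adj_eq_mat_mul: "mul_adj s X Y = mat_mul s X (mat_adj Y)"
  by (intro ext) (simp add: mul_adj_def mat_mul_def mat_adj_def)

lemma frob2_nonneg: "0 \<le> frob2 s X"
  by (simp add: frob2_def sum_nonneg)

lemma frob2_eq_0_iff: "frob2 s X = 0 \<longleftrightarrow> (\<forall>a<s. \<forall>b<s. X a b = 0)"
  by (auto simp: frob2_def sum_nonneg sum_nonneg_eq_0_iff)

lemma frob2_adj: "frob2 s (mat_adj X) = frob2 s X"
  unfolding frob2_def mat_adj_def by (subst sum.swap) simp

lemma mat_tr_mul_adj: "mat_tr s (mat_mul s X (mat_adj X)) = of_real (frob2 s X)"
  unfolding mat_tr_def mat_mul_def mat_adj_def frob2_def
  by (simp add: complex_norm_square del: of_real_power)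

lemma mat_tr_adj_mul: "mat_tr s (mat_mul s (mat_adj X) X) = of_real (frob2 s X)"
  using mat_tr_mul_commute mat_tr_mul_adj by metis

section \<open>Idempotent matrices have natural trace\<close>

definition trace_mat :: "'a::comm_ring mat \<Rightarrow> 'a" where
  "trace_mat A = (\<Sum>i<dim_row A. A $$ (i, i))"

lemma trace_mat_mult_commute:
  assumes "A \<in> carrier_mat n m" "B \<in> carrier_mat m n"
  shows "trace_mat (A * B) = trace_mat (B * A)"
proof -
  have "trace_mat (A * B) = (\<Sum>i<n. \<Sum>k<m. A $$ (i, k) * B $$ (k, i))"
    using assms by (simp add: trace_mat_def scalar_prod_def atLeast0LessThan)
  also have "\<dots> = (\<Sum>k<m. \<Sum>i<n. B $$ (k, i) * A $$ (i, k))"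
    by (subst sum.swap) (simp add: mult.commute)
  also have "\<dots> = trace_mat (B * A)"
    using assms by (simp add: trace_mat_def scalar_prod_def atLeast0LessThan)
  finally show ?thesis .
qed

lemma sum_in_Nats: "(\<And>i. i \<in> I \<Longrightarrow> f i \<in> \<nat>) \<Longrightarrow> sum f I \<in> \<nat>"
  by (induction I rule: infinite_finite_induct) auto

lemma upper_triangular_idempotent_diag:
  fixes B :: "'a::idom mat"
  assumes B: "B \<in> carrier_mat n n" and ut: "upper_triangular B" and idem: "B * B = B" and "i < n"
  shows "B $$ (i, i) = 0 \<or> B $$ (i, i) = 1"
proof -
  have "(B * B) $$ (i, i) = (\<Sum>k<n. B $$ (i, k) * B $$ (k, i))"
    using B \<open>i < n\<close> by (simp add: scalar_prod_def atLeast0LessThan)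
  also have "\<dots> = (\<Sum>k<n. if k = i then B $$ (i, i) * B $$ (i, i) else 0)"
  proof (rule sum.cong [OF refl])
    fix k
    assume "k \<in> {..<n}"
    then show "B $$ (i, k) * B $$ (k, i) = (if k = i then B $$ (i, i) * B $$ (i, i) else 0)"
      using upper_triangularD [OF ut, of k i] upper_triangularD [OF ut, of i k] B \<open>i < n\<close>
      by (cases k i rule: linorder_cases) auto
  qed
  also have "\<dots> = B $$ (i, i) * B $$ (i, i)"
    using \<open>i < n\<close> by simp
  finally have "B $$ (i, i) * (B $$ (i, i) - 1) = 0"
    using idem by (simp add: algebra_simps)
  then show ?thesis
    by simp
qed

lemma trace_mat_idempotent_in_Nats:
  fixes M :: "complex mat"
  assumes M: "M \<in> carrier_mat n n" and idem: "M * M = M"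
  shows "trace_mat M \<in> \<nat>"
proof -
  obtain es where "char_poly M = (\<Prod>e\<leftarrow>es. [:- e, 1:])"
    using char_poly_factorized[OF M] by blast
  then obtain B where B: "B \<in> carrier_mat n n" and ut: "upper_triangular B" and "similar_mat M B"
    using schur_decomposition_exists[OF M] by blast
  then obtain P Q where wit: "similar_mat_wit B M P Q"
    unfolding similar_mat_def using similar_mat_wit_sym by blast
  then have P: "P \<in> carrier_mat n n" and Q: "Q \<in> carrier_mat n n"
    and QP: "Q * P = 1\<^sub>m n" and BPMQ: "B = P * M * Q"
    using B by (auto simp: similar_mat_wit_def Let_def)
  have "B * B = P * (M * M) * Q"
    using similar_mat_wit_pow_id[OF wit, of 2] B M by (simp add: numeral_2_eq_2)
  then have idemB: "B * B = B"
    using idem BPMQ by simp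
  have "trace_mat B = trace_mat ((P * M) * Q)"
    using BPMQ by simp
  also have "\<dots> = trace_mat (Q * (P * M))"
    using P M Q by (intro trace_mat_mult_commute[of _ n n]) auto
  also have "\<dots> = trace_mat ((Q * P) * M)"
    using P M Q by simp
  also have "\<dots> = trace_mat M"
    using QP M by simp
  finally have "trace_mat M = (\<Sum>i<n. B $$ (i, i))"
    using B by (simp add: trace_mat_def)
  moreover have "B $$ (i, i) \<in> \<nat>" if "i < n" for i
    using upper_triangular_idempotent_diag [OF B ut idemB that] by auto
  then have "(\<Sum>i<n. B $$ (i, i)) \<in> \<nat>"
    by (intro sum_in_Nats) simp
  ultimately show ?thesis
    by simp
qed

lemma mat_tr_idempotent_in_Nats:
  assumes "\<forall>a<s. \<forall>b<s. mat_mul s P P a b = P a b"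
  shows "mat_tr s P \<in> \<nat>"
proof -
  define M where "M = mat s s (\<lambda>(a, b). P a b)"
  have "M * M = M"
    using assms by (intro eq_matI) (auto simp: M_def mat_mul_def scalar_prod_def atLeast0LessThan)
  then have "trace_mat M \<in> \<nat>"
    by (intro trace_mat_idempotent_in_Nats[of _ s]) (simp_all add: M_def)
  then show ?thesis
    by (simp add: M_def trace_mat_def mat_tr_def)
qed

section \<open>Brackets overlapping in a single index\<close>

definition block_coisometry :: "nat \<Rightarrow> nat \<Rightarrow> (nat \<Rightarrow> nat \<Rightarrow> nat \<Rightarrow> complex) \<Rightarrow> bool" where
  "block_coisometry d s A \<longleftrightarrow>
     (\<forall>a<s. \<forall>b<s. (\<Sum>i<d. mul_adj s (A i) (A i) a b) = (if a = b then 1 else 0))"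

lemma block_coisometry_frob2_gram_le:
  assumes A: "block_coisometry d s A" and "\<beta> < d"
  shows "frob2 s (mat_mul s (mat_adj (A \<beta>)) (A \<beta>)) \<le> frob2 s (A \<beta>)"
proof -
  \<comment> \<open>tr (A_\<beta> A_\<beta>^*) = \<Sum>_i |A_i^* A_\<beta>|^2 as \<Sum>_i A_i A_i^* = I; the term i = \<beta> is |A_\<beta>^* A_\<beta>|^2.\<close>
  define G where "G = mat_mul s (A \<beta>) (mat_adj (A \<beta>))"
  have "mat_tr s G = (\<Sum>a<s. \<Sum>c<s. G a c * (\<Sum>i<d. mul_adj s (A i) (A i) c a))"
    unfolding mat_tr_def
  proof (rule sum.cong [OF refl])
    fix a
    assume "a \<in> {..<s}"
    then have "(\<Sum>c<s. G a c * (\<Sum>i<d. mul_adj s (A i) (A i) c a)) = mat_mul s G mat_id a a"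
      using A by (auto simp: block_coisometry_def mat_mul_def mat_id_def intro!: sum.cong)
    then show "G a a = (\<Sum>c<s. G a c * (\<Sum>i<d. mul_adj s (A i) (A i) c a))"
      using \<open>a \<in> {..<s}\<close> by (simp add: mat_mul_id_right)
  qed
  also have "\<dots> = (\<Sum>i<d. mat_tr s (mat_mul s G (mat_mul s (A i) (mat_adj (A i)))))"
    unfolding mat_tr_def mat_mul_def mul_adj_eq_mat_mul sum_distrib_left
    by (subst sum.swap, subst (2) sum.swap) (rule refl)
  also have "\<dots> = (\<Sum>i<d. of_real (frob2 s (mat_mul s (mat_adj (A i)) (A \<beta>))))"
    by (intro sum.cong refl)
      (metis G_def mat_adj_adj mat_adj_mul mat_mul_assoc mat_tr_mul_adj mat_tr_mul_commute)
  finally have "frob2 s (A \<beta>) = (\<Sum>i<d. frob2 s (mat_mul s (mat_adj (A i)) (A \<beta>)))"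
    by (metis G_def mat_tr_mul_adj of_real_eq_iff of_real_sum)
  also have "\<dots> \<ge> frob2 s (mat_mul s (mat_adj (A \<beta>)) (A \<beta>))"
    using \<open>\<beta> < d\<close> by (intro member_le_sum frob2_nonneg) auto
  finally show ?thesis .
qed

lemma gram_mul_gram_eq_0:
  assumes "\<forall>a<s. \<forall>b<s. mul_adj s X Y a b = 0"
  shows "mat_mul s (mat_mul s (mat_adj X) X) (mat_mul s (mat_adj Y) Y) = (\<lambda>a b. 0)"
proof -
  have "mat_mul s (mul_adj s X Y) Y c b = 0" if "c < s" for c b
    using assms that by (simp add: mat_mul_def)
  moreover have "mat_mul s (mat_mul s (mat_adj X) X) (mat_mul s (mat_adj Y) Y)
      = mat_mul s (mat_adj X) (mat_mul s (mul_adj s X Y) Y)"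
    by (simp add: mat_mul_assoc mul_adj_eq_mat_mul)
  ultimately show ?thesis
    by (simp add: mat_mul_def [of s "mat_adj X"])
qed

lemma frob2_id_diff_grams:
  assumes "\<forall>a<s. \<forall>b<s. mul_adj s X Y a b = 0"
  defines "P \<equiv> mat_mul s (mat_adj X) X" and "Q \<equiv> mat_mul s (mat_adj Y) Y"
  shows "frob2 s (mat_id - P - Q)
    = real s - 2 * frob2 s X - 2 * frob2 s Y + frob2 s P + frob2 s Q"
proof -
  have tr_hermitian: "mat_tr s (mat_mul s H H) = of_real (frob2 s H)" if "mat_adj H = H" for H
    using mat_tr_mul_adj [of s H] that by simp
  have "mat_adj P = P" "mat_adj Q = Q"
    by (simp_all add: P_def Q_def mat_adj_mul)
  moreover have "mat_adj (mat_id - P - Q) = mat_id - P - Q"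
    using calculation by (auto simp: fun_eq_iff mat_adj_def mat_id_def)
  moreover have "mat_tr s (mat_mul s P Q) = 0" "mat_tr s (mat_mul s Q P) = 0"
    using gram_mul_gram_eq_0 [OF assms(1)] mat_tr_mul_commute [of s Q P]
    by (simp_all add: P_def Q_def mat_tr_def)
  moreover have "mat_tr s P = of_real (frob2 s X)" "mat_tr s Q = of_real (frob2 s Y)"
    by (simp_all add: P_def Q_def mat_tr_adj_mul)
  ultimately have "of_real (frob2 s (mat_id - P - Q))
      = (of_real (real s - 2 * frob2 s X - 2 * frob2 s Y + frob2 s P + frob2 s Q) :: complex)"
    by (simp add: tr_hermitian [symmetric] mat_mul_diff_left mat_mul_diff_right mat_tr_diff
        mat_tr_mul_id_left mat_tr_mul_id_right mat_tr_id)
  then show ?thesis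
    using of_real_eq_iff by blast
qed

lemma frob2_in_Nats_if_orthogonal:
  assumes A: "block_coisometry d s A" and B: "block_coisometry d s B" and "\<beta> < d"
    and orth: "\<forall>a<s. \<forall>b<s. mul_adj s (A \<beta>) (B \<beta>) a b = 0"
    and total: "frob2 s (A \<beta>) + frob2 s (B \<beta>) = real s"
  shows "frob2 s (A \<beta>) \<in> \<nat>"
proof -
  define P where "P = mat_mul s (mat_adj (A \<beta>)) (A \<beta>)"
  define Q where "Q = mat_mul s (mat_adj (B \<beta>)) (B \<beta>)"
  have "frob2 s (mat_id - P - Q) \<le> 0"
    using frob2_id_diff_grams [OF orth] block_coisometry_frob2_gram_le [OF A \<open>\<beta> < d\<close>]
      block_coisometry_frob2_gram_le [OF B \<open>\<beta> < d\<close>] total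
    by (simp add: P_def Q_def)
  then have id_eq: "(mat_id - P - Q) a b = 0" if "a < s" "b < s" for a b
    using frob2_nonneg [of s "mat_id - P - Q"] frob2_eq_0_iff that by (metis order_antisym)
  have "mat_mul s P P a b = P a b" if "a < s" "b < s" for a b
  proof -
    have "P c b = (mat_id - Q) c b" if "c < s" for c
      using id_eq [OF that \<open>b < s\<close>] by (simp add: algebra_simps)
    then have "mat_mul s P P a b = mat_mul s P (mat_id - Q) a b"
      unfolding mat_mul_def by (intro sum.cong) auto
    also have "\<dots> = P a b"
      using gram_mul_gram_eq_0 [OF orth] that
      by (simp add: P_def Q_def mat_mul_diff_right mat_mul_id_right)
    finally show ?thesis .
  qed
  then have "mat_tr s P \<in> \<nat>"
    by (simp add: mat_tr_idempotent_in_Nats)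
  then have "complex_of_real (frob2 s (A \<beta>)) \<in> \<nat>"
    by (simp add: P_def mat_tr_adj_mul)
  then show ?thesis
    by (auto simp: complex_is_Nat_iff)
qed

section \<open>Block rows and columns of unitaries\<close>

lemma sum_lessThan_mult_blocks:
  fixes g :: "nat \<Rightarrow> 'a::comm_monoid_add"
  shows "(\<Sum>i<d. \<Sum>c<s. g (i * s + c)) = (\<Sum>r<d * s. g r)"
proof -
  have "(\<Sum>c<s. g (i * s + c)) = sum g {i * s..<i * s + s}" for i
    using sum.shift_bounds_nat_ivl[of g 0 "i * s" s] by (simp add: atLeast0LessThan add.commute)
  then show ?thesis
    using sum.nat_group[of g s d] by simp
qed

lemma block_index_less: "i < d \<Longrightarrow> a < s \<Longrightarrow> i * s + a < d * (s::nat)"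
proof -
  assume "i < d" "a < s"
  then have "Suc i * s \<le> d * s"
    by (intro mult_le_mono1) simp
  with \<open>a < s\<close> show ?thesis
    by simp
qed

lemma block_index_eq_iff: "a < s \<Longrightarrow> b < s \<Longrightarrow> i * s + a = j * s + b \<longleftrightarrow> i = j \<and> a = (b::nat)"
  by (metis add.commute add_mult_distrib2 mod_mult_self2 mod_less div_mult_self1 div_less
      add.right_neutral less_nat_zero_code mult.commute)

lemma unitary_mat_adj: "unitary_mat n U \<Longrightarrow> unitary_mat n (mat_adj U)"
  by (simp add: unitary_mat_def mat_adj_def)

lemma block_adj: "block s (mat_adj U) i j = mat_adj (block s U j i)"
  by (simp add: block_def mat_adj_def)

lemma Uset_transpose:
  assumes "B \<in> Uset d s"
  shows "(\<lambda>i j. B j i) \<in> Uset d s"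
proof -
  obtain U where "unitary_mat (d * s) U" "\<forall>i<d. \<forall>j<d. B i j = phi d s U i j"
    using assms unfolding Uset_def by blast
  then have "unitary_mat (d * s) (mat_adj U)" "\<forall>i<d. \<forall>j<d. B j i = phi d s (mat_adj U) i j"
    by (simp_all add: unitary_mat_adj phi_def block_adj frob2_adj)
  then show ?thesis
    unfolding Uset_def by blast
qed

lemma unitary_block_rows:
  assumes U: "unitary_mat (d * s) U" and "i < d" "j < d" "a < s" "b < s"
  shows "(\<Sum>k<d. mul_adj s (block s U i k) (block s U j k) a b) = (if i = j \<and> a = b then 1 else 0)"
proof -
  have "(\<Sum>k<d. mul_adj s (block s U i k) (block s U j k) a b)
      = (\<Sum>k<d. \<Sum>c<s. U (i * s + a) (k * s + c) * cnj (U (j * s + b) (k * s + c)))"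
    by (simp add: mul_adj_def block_def)
  also have "\<dots> = (\<Sum>r<d * s. U (i * s + a) r * cnj (U (j * s + b) r))"
    by (rule sum_lessThan_mult_blocks)
  also have "\<dots> = (if i * s + a = j * s + b then 1 else 0)"
    using U block_index_less [OF assms(2,4)] block_index_less [OF assms(3,5)]
    unfolding unitary_mat_def by simp
  finally show ?thesis
    using assms(4,5) by (simp add: block_index_eq_iff)
qed

lemma block_coisometry_sum_frob2:
  assumes "block_coisometry d s A"
  shows "(\<Sum>i<d. frob2 s (A i)) = real s"
proof -
  have "of_real (\<Sum>i<d. frob2 s (A i)) = (\<Sum>i<d. mat_tr s (mul_adj s (A i) (A i)))"
    by (simp add: mul_adj_eq_mat_mul mat_tr_mul_adj)
  also have "\<dots> = (\<Sum>a<s. \<Sum>i<d. mul_adj s (A i) (A i) a a)"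
    unfolding mat_tr_def by (rule sum.swap)
  also have "\<dots> = of_nat s"
    using assms by (simp add: block_coisometry_def)
  finally show ?thesis
    by (metis of_real_eq_iff of_real_of_nat_eq)
qed

lemma Uset_row_realization:
  assumes "B \<in> Uset d s"
  obtains A where "\<And>i. i < d \<Longrightarrow> block_coisometry d s (A i)"
    and "\<And>i j a b. i < d \<Longrightarrow> j < d \<Longrightarrow> i \<noteq> j \<Longrightarrow> a < s \<Longrightarrow> b < s
           \<Longrightarrow> (\<Sum>k<d. mul_adj s (A i k) (A j k) a b) = 0"
    and "\<And>i j. i < d \<Longrightarrow> j < d \<Longrightarrow> B i j = frob2 s (A i j) / real s"
proof -
  obtain U where U: "unitary_mat (d * s) U" and B: "\<forall>i<d. \<forall>j<d. B i j = phi d s U i j"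
    using assms unfolding Uset_def by blast
  show ?thesis
  proof (rule that [of "\<lambda>i k. block s U i k"])
    show "block_coisometry d s (\<lambda>k. block s U i k)" if "i < d" for i
      unfolding block_coisometry_def using unitary_block_rows [OF U that that] by simp
    show "(\<Sum>k<d. mul_adj s (block s U i k) (block s U j k) a b) = 0"
      if "i < d" "j < d" "i \<noteq> j" "a < s" "b < s" for i j a b
      using unitary_block_rows [OF U that(1,2,4,5)] that(3) by simp
    show "B i j = frob2 s (block s U i j) / real s" if "i < d" "j < d" for i j
      using B that by (simp add: phi_def)
  qed
qed

lemma Uset_row_prob_vec:
  assumes "B \<in> Uset d s" "s \<ge> 1" "i < d"
  shows "prob_vec d (B i)"
proof -
  obtain A where coiso: "\<And>i. i < d \<Longrightarrow> block_coisometry d s (A i)"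
    and "\<And>i j a b. i < d \<Longrightarrow> j < d \<Longrightarrow> i \<noteq> j \<Longrightarrow> a < s \<Longrightarrow> b < s
           \<Longrightarrow> (\<Sum>k<d. mul_adj s (A i k) (A j k) a b) = 0"
    and BA: "\<And>i j. i < d \<Longrightarrow> j < d \<Longrightarrow> B i j = frob2 s (A i j) / real s"
    using Uset_row_realization [OF assms(1)] by blast
  have "(\<Sum>j<d. B i j) = 1"
    using assms(2) block_coisometry_sum_frob2 [OF coiso [OF \<open>i < d\<close>]] BA [OF \<open>i < d\<close>]
    by (simp add: sum_divide_distrib [symmetric])
  with BA [OF \<open>i < d\<close>] show ?thesis
    unfolding prob_vec_def by (simp add: frob2_nonneg)
qed

lemma Uset_rows_Brac:
  assumes B: "B \<in> Uset d s" and "s \<ge> 1" "i < d" "j < d" "i \<noteq> j"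
  shows "Brac d s (B i) (B j)"
proof -
  obtain A where coiso: "\<And>i. i < d \<Longrightarrow> block_coisometry d s (A i)"
    and orth: "\<And>i j a b. i < d \<Longrightarrow> j < d \<Longrightarrow> i \<noteq> j \<Longrightarrow> a < s \<Longrightarrow> b < s
           \<Longrightarrow> (\<Sum>k<d. mul_adj s (A i k) (A j k) a b) = 0"
    and BA: "\<And>i j. i < d \<Longrightarrow> j < d \<Longrightarrow> B i j = frob2 s (A i j) / real s"
    using Uset_row_realization [OF B] by blast
  show ?thesis
    unfolding Brac_def
    using Uset_row_prob_vec [OF B \<open>s \<ge> 1\<close>] coiso [unfolded block_coisometry_def] orth BA assms(3-5)
    by (intro conjI exI [where x = "A i"] exI [where x = "A j"]) simp_all
qed

lemma Uset_subset_Lset: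
  assumes "s \<ge> 1"
  shows "Uset d s \<subseteq> Lset d s"
proof
  fix B
  assume B: "B \<in> Uset d s"
  have "prob_vec d (B i)" "prob_vec d (\<lambda>j. B j i)" if "i < d" for i
    using Uset_row_prob_vec [OF B assms that] Uset_row_prob_vec [OF Uset_transpose [OF B] assms that]
    by simp_all
  then have "bistochastic d B"
    unfolding bistochastic_def prob_vec_def by blast
  moreover have "Brac d s (B i) (B j)" "Brac d s (\<lambda>k. B k i) (\<lambda>k. B k j)"
    if "i < d" "j < d" "i \<noteq> j" for i j
    using Uset_rows_Brac [OF B assms that] Uset_rows_Brac [OF Uset_transpose [OF B] assms that]
    by simp_all
  ultimately show "B \<in> Lset d s"
    unfolding Lset_def by simp
qed

section \<open>Edges of the Birkhoff polytope\<close>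

lemma unitary_mat_perm:
  assumes inj: "inj_on f {..<n}" and maps: "f ` {..<n} \<subseteq> {..<n}"
  shows "unitary_mat n (\<lambda>r c. if f r = c then 1 else 0)"
  unfolding unitary_mat_def
proof (intro conjI allI impI)
  fix i j
  assume "i < n" "j < n"
  have "(\<Sum>k<n. (if f i = k then 1 else 0) * cnj (if f j = k then 1 else 0))
      = (\<Sum>k<n. if k = f i then (if f i = f j then 1 else 0) else (0::complex))"
    by (intro sum.cong) auto
  also have "\<dots> = (if f i = f j then 1 else 0)"
    using maps \<open>i < n\<close> by auto
  finally have "(\<Sum>k<n. (if f i = k then 1 else 0) * cnj (if f j = k then 1 else 0))
      = (if f i = f j then 1 else (0::complex))" .
  then show "(\<Sum>k<n. (if f i = k then 1 else 0) * cnj (if f j = k then 1 else 0))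
      = (if i = j then 1 else (0::complex))"
    using inj \<open>i < n\<close> \<open>j < n\<close> by (auto dest: inj_onD)
next
  fix i j
  assume "i < n" "j < n"
  have "f ` {..<n} = {..<n}"
    using inj maps by (intro endo_inj_surj) auto
  then obtain k0 where k0: "k0 < n" "f k0 = i"
    using \<open>i < n\<close> by (metis imageE lessThan_iff)
  then have "f k = i \<longleftrightarrow> k = k0" if "k < n" for k
    using inj that by (auto dest: inj_onD)
  then have "(\<Sum>k<n. cnj (if f k = i then 1 else 0) * (if f k = j then 1 else 0))
      = (\<Sum>k<n. if k = k0 then (if i = j then 1 else 0) else (0::complex))"
    by (intro sum.cong) auto
  then show "(\<Sum>k<n. cnj (if f k = i then 1 else 0) * (if f k = j then 1 else 0))
      = (if i = j then 1 else (0::complex))"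
    using k0 by simp
qed

lemma card_orbit_ge_3_imp_neq:
  assumes "3 \<le> card (orbit f x)"
  shows "f x \<noteq> x" "f (f x) \<noteq> x"
proof -
  have "orbit f x \<subseteq> S" if "f x \<in> S" "\<And>y. y \<in> S \<Longrightarrow> f y \<in> S" for S
  proof
    fix z
    assume "z \<in> orbit f x"
    then show "z \<in> S"
      by (induction rule: orbit.induct) (use that in auto)
  qed
  then have "f (f x) = x \<Longrightarrow> card (orbit f x) \<le> card {x, f x}"
    by (intro card_mono) auto
  moreover have "card {x, f x} \<le> 2"
    by (simp add: card_insert_le_m1)
  ultimately show "f (f x) \<noteq> x"
    using assms by linarith
  then show "f x \<noteq> x"
    by auto
qed

lemma copywise_index_map:
  fixes d s :: nat
  assumes "s \<ge> 1" and perm: "\<And>a. a < s \<Longrightarrow> (\<lambda>i. g i a) permutes {..<d}"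
  defines "f \<equiv> \<lambda>r. g (r div s) (r mod s) * s + r mod s"
  shows "inj_on f {..<d * s}" and "f ` {..<d * s} \<subseteq> {..<d * s}"
proof (rule inj_onI)
  fix r r'
  assume "f r = f r'"
  moreover have "r mod s < s" "r' mod s < s"
    using \<open>s \<ge> 1\<close> by auto
  ultimately have "g (r div s) (r mod s) = g (r' div s) (r mod s)" and "r mod s = r' mod s"
    by (auto simp: f_def block_index_eq_iff)
  then have "r div s = r' div s"
    using permutes_inj [OF perm [OF \<open>r mod s < s\<close>]] by (auto dest: injD)
  with \<open>r mod s = r' mod s\<close> show "r = r'"
    by (metis div_mult_mod_eq)
next
  show "f ` {..<d * s} \<subseteq> {..<d * s}"
  proof
    fix c
    assume "c \<in> f ` {..<d * s}"
    then obtain r where "r < d * s" "c = f r"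
      by auto
    moreover have "r div s < d" "r mod s < s"
      using \<open>r < d * s\<close> \<open>s \<ge> 1\<close> by (auto simp: less_mult_imp_div_less)
    ultimately show "c \<in> {..<d * s}"
      using permutes_in_image [OF perm] by (simp add: f_def block_index_less)
  qed
qed

lemma Uset_copywise_perm:
  assumes "s \<ge> 1" and perm: "\<And>a. a < s \<Longrightarrow> (\<lambda>i. g i a) permutes {..<d}"
    and B: "\<And>i j. i < d \<Longrightarrow> j < d \<Longrightarrow> B i j = (\<Sum>a<s. of_bool (g i a = j)) / real s"
  shows "B \<in> Uset d s"
proof -
  \<comment> \<open>Row i * s + a (copy a of index i) is sent to copy a of index g i a.\<close>
  define U where "U r c = (if g (r div s) (r mod s) * s + r mod s = c then 1 else 0 :: complex)"
    for r c
  have "unitary_mat (d * s) U"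
    unfolding U_def using copywise_index_map [OF assms(1,2)] by (intro unitary_mat_perm)
  moreover have "phi d s U i j = B i j" if "i < d" "j < d" for i j
  proof -
    have "(\<Sum>b<s. (cmod (block s U i j a b))\<^sup>2) = of_bool (g i a = j)" if "a < s" for a
    proof -
      have "block s U i j a b = (if b = a then of_bool (g i a = j) else 0)" if "b < s" for b
        using block_index_eq_iff [OF \<open>a < s\<close> that, of "g i a" j] \<open>a < s\<close>
        by (auto simp: block_def U_def)
      then have "(\<Sum>b<s. (cmod (block s U i j a b))\<^sup>2)
          = (\<Sum>b<s. if b = a then of_bool (g i a = j) else 0)"
        by (intro sum.cong) auto
      then show ?thesis
        using \<open>a < s\<close> by simp
    qed
    then show ?thesis
      using B [OF that] by (simp add: phi_def frob2_def)
  qed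
  ultimately show ?thesis
    unfolding Uset_def by auto
qed

lemma edge_point_in_Uset:
  assumes \<pi>: "\<pi> permutes {..<d}" and \<sigma>: "\<sigma> permutes {..<d}" and "s \<ge> 1" "k \<le> s"
  shows "(\<lambda>i j. (1 - real k / real s) * perm_mat \<pi> i j + real k / real s * perm_mat \<sigma> i j)
           \<in> Uset d s"
proof (rule Uset_copywise_perm [where g = "\<lambda>i a. if a < s - k then \<pi> i else \<sigma> i"])
  show "(\<lambda>i. if a < s - k then \<pi> i else \<sigma> i) permutes {..<d}" for a
    using \<pi> \<sigma> by (cases "a < s - k") simp_all
  fix i j
  have "{..<s} \<inter> {a. a < s - k} = {..<s - k}" "{..<s} \<inter> {a. \<not> a < s - k} = {s - k..<s}"
    by auto
  then have "(\<Sum>a<s. of_bool ((if a < s - k then \<pi> i else \<sigma> i) = j))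
      = real (s - k) * perm_mat \<pi> i j + real k * perm_mat \<sigma> i j"
    using \<open>k \<le> s\<close> by (simp add: if_distrib sum.If_cases perm_mat_def)
  then show "(1 - real k / real s) * perm_mat \<pi> i j + real k / real s * perm_mat \<sigma> i j
      = (\<Sum>a<s. of_bool ((if a < s - k then \<pi> i else \<sigma> i) = j)) / real s"
    using \<open>s \<ge> 1\<close> \<open>k \<le> s\<close> by (simp add: of_nat_diff field_simps)
qed (use \<open>s \<ge> 1\<close> in simp)

lemma Brac_single_overlap_in_Nats:
  assumes "Brac d s \<alpha> \<beta>" "s \<ge> 1" "b < d"
    and disjoint: "\<And>i. i < d \<Longrightarrow> i \<noteq> b \<Longrightarrow> \<alpha> i = 0 \<or> \<beta> i = 0"
    and "\<alpha> b + \<beta> b = 1"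
  shows "real s * \<alpha> b \<in> \<nat>"
proof -
  obtain A B where A: "block_coisometry d s A" and B: "block_coisometry d s B"
    and AB: "\<forall>a<s. \<forall>c<s. (\<Sum>i<d. mul_adj s (A i) (B i) a c) = 0"
    and "\<forall>i<d. frob2 s (A i) / real s = \<alpha> i \<and> frob2 s (B i) / real s = \<beta> i"
    using assms(1) unfolding Brac_def block_coisometry_def by blast
  then have frob2_A: "frob2 s (A i) = real s * \<alpha> i" and frob2_B: "frob2 s (B i) = real s * \<beta> i"
    if "i < d" for i
    using that \<open>s \<ge> 1\<close> by (auto simp: field_simps)
  have "mul_adj s (A i) (B i) a c = 0" if "i < d" "i \<noteq> b" "a < s" "c < s" for i a c
    using disjoint [OF that(1,2)] frob2_A [OF that(1)] frob2_B [OF that(1)] that(3,4)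
    by (auto simp: frob2_eq_0_iff mul_adj_def)
  then have "mul_adj s (A b) (B b) a c = 0" if "a < s" "c < s" for a c
    using AB that \<open>b < d\<close> by (simp add: sum.remove [of "{..<d}" b])
  moreover have "frob2 s (A b) + frob2 s (B b) = real s"
    using \<open>b < d\<close> \<open>\<alpha> b + \<beta> b = 1\<close> by (simp add: frob2_A frob2_B flip: distrib_left)
  ultimately show ?thesis
    using frob2_in_Nats_if_orthogonal [OF A B \<open>b < d\<close>] frob2_A [OF \<open>b < d\<close>] by simp
qed

lemma edge_in_Lset_imp_mult_in_Nats:
  assumes \<pi>: "\<pi> permutes {..<d}" and \<sigma>: "\<sigma> permutes {..<d}" and "s \<ge> 1"
    and "x < d" and "3 \<le> card (orbit (inv \<pi> \<circ> \<sigma>) x)"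
    and L: "(\<lambda>i j. (1 - t) * perm_mat \<pi> i j + t * perm_mat \<sigma> i j) \<in> Lset d s"
  shows "real s * t \<in> \<nat>"
proof -
  define y where "y = inv \<pi> (\<sigma> x)"
  have "y \<noteq> x" "inv \<pi> (\<sigma> y) \<noteq> x"
    using card_orbit_ge_3_imp_neq [OF assms(5)] by (simp_all add: y_def)
  have "y < d"
    using \<open>x < d\<close> permutes_in_image [OF \<sigma>] permutes_in_image [OF permutes_inv [OF \<pi>]]
    by (simp add: y_def)
  have "\<pi> y = \<sigma> x"
    by (simp add: y_def permutes_inverses(1) [OF \<pi>])
  have "\<pi> x \<noteq> \<sigma> x" "\<sigma> x \<noteq> \<sigma> y" "\<pi> x \<noteq> \<sigma> y"
    using \<open>y \<noteq> x\<close> \<open>inv \<pi> (\<sigma> y) \<noteq> x\<close> \<open>\<pi> y = \<sigma> x\<close> permutes_inverses(2) [OF \<pi>]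
      permutes_inj [OF \<sigma>] by (metis injD)+
  have rows_Brac: "Brac d s (\<lambda>k. (1 - t) * perm_mat \<pi> x k + t * perm_mat \<sigma> x k)
                 (\<lambda>k. (1 - t) * perm_mat \<pi> y k + t * perm_mat \<sigma> y k)"
    using L \<open>x < d\<close> \<open>y < d\<close> \<open>y \<noteq> x\<close> unfolding Lset_def by auto
  have "\<sigma> x < d"
    using permutes_in_image [OF \<sigma>] \<open>x < d\<close> by simp
  have "real s * ((1 - t) * perm_mat \<pi> x (\<sigma> x) + t * perm_mat \<sigma> x (\<sigma> x)) \<in> \<nat>"
    using rows_Brac \<open>s \<ge> 1\<close> \<open>\<sigma> x < d\<close> by (rule Brac_single_overlap_in_Nats)
      (use \<open>\<pi> x \<noteq> \<sigma> x\<close> \<open>\<sigma> x \<noteq> \<sigma> y\<close> \<open>\<pi> x \<noteq> \<sigma> y\<close> \<open>\<pi> y = \<sigma> x\<close> in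
        \<open>auto simp: perm_mat_def\<close>)
  then show ?thesis
    using \<open>\<pi> x \<noteq> \<sigma> x\<close> by (simp add: perm_mat_def)
qed

theorem proposition3p13:
  fixes d s :: nat and \<pi> \<sigma> :: "nat \<Rightarrow> nat"
  assumes "d \<ge> 3" and "s \<ge> 1"
    and "\<pi> permutes {..<d}" and "\<sigma> permutes {..<d}"
    and "\<exists>p x. p \<ge> 3 \<and> x < d \<and> card (orbit (inv \<pi> \<circ> \<sigma>) x) = p"
  shows "{t\<in>{0..1::real}. (\<lambda>i j. (1 - t) * perm_mat \<pi> i j + t * perm_mat \<sigma> i j) \<in> Uset d s}
           = {t\<in>{0..1::real}. (\<lambda>i j. (1 - t) * perm_mat \<pi> i j + t * perm_mat \<sigma> i j) \<in> Lset d s}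
       \<and> {t\<in>{0..1::real}. (\<lambda>i j. (1 - t) * perm_mat \<pi> i j + t * perm_mat \<sigma> i j) \<in> Lset d s}
           = {real k / real s | k. k \<le> s}"
proof -
  let ?M = "\<lambda>t::real. \<lambda>i j. (1 - t) * perm_mat \<pi> i j + t * perm_mat \<sigma> i j"
  obtain x where x: "x < d" "3 \<le> card (orbit (inv \<pi> \<circ> \<sigma>) x)"
    using assms(5) by auto
  have L_grid: "\<exists>k \<le> s. t = real k / real s" if "t \<le> 1" and L: "?M t \<in> Lset d s" for t
  proof -
    obtain k where "real s * t = real k"
      using edge_in_Lset_imp_mult_in_Nats [OF assms(3,4,2) x L] by (auto simp: Nats_def)
    moreover have "real s * t \<le> real s"
      using \<open>t \<le> 1\<close> by (simp add: mult_left_le)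
    ultimately show ?thesis
      using \<open>s \<ge> 1\<close> by (intro exI [of _ k]) (auto simp: field_simps)
  qed
  have grid_U: "real k / real s \<in> {t\<in>{0..1}. ?M t \<in> Uset d s}" if "k \<le> s" for k
    using edge_point_in_Uset [OF assms(3,4,2) that] that assms(2) by (simp add: divide_le_eq_1)
  have "{t\<in>{0..1}. ?M t \<in> Uset d s} \<subseteq> {t\<in>{0..1}. ?M t \<in> Lset d s}"
    using Uset_subset_Lset [OF assms(2)] by auto
  moreover have "{t\<in>{0..1}. ?M t \<in> Lset d s} \<subseteq> {real k / real s | k. k \<le> s}"
    using L_grid by auto
  moreover have "{real k / real s | k. k \<le> s} \<subseteq> {t\<in>{0..1}. ?M t \<in> Uset d s}"
    using grid_U by auto
  ultimately show ?thesis
    by blast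
qed

end
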